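(* Let $(G,c)$ and $(H,c')$ be BPEC-DAGs on the same vertex set $V$. If $\mathcal M(G,c)=\mathcal M(H,c')$, then $G=H$ and $c$ and $c'$ induce the same partition of the edge set into color classes; i.e., each BPEC-DAG is the unique BPEC-DAG in its model equivalence class.
   Context: An edge-colored DAG $(G,c)$, $G=(V,E)$, has a coloring of $V\sqcup E$ (vertex and edge colors disjoint) in which every vertex forms its own color class. It is properly edge-colored if every edge color class contains at least two edges, and blocked if any two edges $ij,kl$ of the same color satisfy $j=l$. A BPEC-DAG is a blocked, properly edge-colored DAG. $\mathcal M(G,c)$ is the set of $(I-\Lambda)^{-T}\Omega(I-\Lambda)^{-1}$ with $\Omega=\mathrm{diag}(\omega_i)$, $\omega_i>0$, $\lambda_{ij}=0$ for $ij\notin E$, and $\lambda_{ij}=\lambda_{kl}$ whenever $c(ij)=c(kl)$. *)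

theory Defs
  imports "HOL-Analysis.Analysis"
begin

text \<open>A DAG on the vertex set given by the finite type 'v: an edge relation
  E, where (i,j) \<in> E denotes the directed edge i \<rightarrow> j, which is acyclic.
  Vertex colors are all singletons and disjoint from edge colors, so they
  carry no information; the coloring is represented by its edge part
  c :: 'v \<times> 'v \<Rightarrow> 'c, only relevant on E.\<close>

definition is_DAG :: "('v \<times> 'v) set \<Rightarrow> bool" where
  "is_DAG E \<longleftrightarrow> acyclic E"

definition properly_edge_colored :: "('v \<times> 'v) set \<Rightarrow> ('v \<times> 'v \<Rightarrow> 'c) \<Rightarrow> bool" where
  "properly_edge_colored E c \<longleftrightarrow>
     (\<forall>e \<in> E. 2 \<le> card {f \<in> E. c f = c e})"

definition blocked :: "('v \<times> 'v) set \<Rightarrow> ('v \<times> 'v \<Rightarrow> 'c) \<Rightarrow> bool" where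
  "blocked E c \<longleftrightarrow>
     (\<forall>i j k l. (i, j) \<in> E \<longrightarrow> (k, l) \<in> E \<longrightarrow> c (i, j) = c (k, l) \<longrightarrow> j = l)"

definition BPEC_DAG :: "('v \<times> 'v) set \<Rightarrow> ('v \<times> 'v \<Rightarrow> 'c) \<Rightarrow> bool" where
  "BPEC_DAG E c \<longleftrightarrow> is_DAG E \<and> properly_edge_colored E c \<and> blocked E c"

definition model :: "('v::finite \<times> 'v) set \<Rightarrow> ('v \<times> 'v \<Rightarrow> 'c) \<Rightarrow> (real^'v^'v) set" where
  "model E c = {transpose (matrix_inv (mat 1 - \<Lambda>)) ** (\<chi> i j. if i = j then \<omega> i else 0)
                   ** matrix_inv (mat 1 - \<Lambda>) |
      \<Lambda> \<omega>. (\<forall>i. 0 < \<omega> i) \<and>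
            (\<forall>i j. (i, j) \<notin> E \<longrightarrow> \<Lambda> $ i $ j = 0) \<and>
            (\<forall>i j k l. (i, j) \<in> E \<longrightarrow> (k, l) \<in> E \<longrightarrow> c (i, j) = c (k, l) \<longrightarrow>
                        \<Lambda> $ i $ j = \<Lambda> $ k $ l)}"

end

theory Submission
  imports Defs
begin

text \<open>Fix an edge ik of G and let C be the set of tails of the edges of G coloured like ik;
  since G is blocked, all of them point to k. Weight one on exactly these edges and unit error
  variances give a point of M(G,c) whose inverse is (I - N)(I - N)^T, with N the indicator
  matrix of C \<times> {k}. As the point also lies in M(H,c'), the same matrix factors as
  (I - \<Lambda>) \<Omega>^-1 (I - \<Lambda>)^T with \<Lambda> supported on H and constant on its colour classes.
  Working upwards from the sinks of H, every vertex from which H cannot reach C \<union> {k} has a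
  zero column in \<Lambda> and unit variance. At an H-maximal vertex t of C \<union> {k} the two
  factorisations can then be compared entrywise. The case t \<in> C is impossible: the edge kt of H
  needs a second edge k't of its colour, and then the entry (k', t) would be -1, whereas it is
  nonnegative for (I - N)(I - N)^T. So t = k and the k-th column of \<Lambda> is the indicator of C:
  ik is an edge of H, and every edge of H coloured like ik is an edge of G coloured like ik.
  Applying this in both directions gives the theorem.\<close>

definition diag_mat :: "('n \<Rightarrow> real) \<Rightarrow> real^'n^'n" where
  "diag_mat d = (\<chi> i j. if i = j then d i else 0)"

definition supported_on :: "('v \<times> 'v) set \<Rightarrow> real^'v^'v \<Rightarrow> bool" where
  "supported_on F L \<longleftrightarrow> (\<forall>i j. (i, j) \<notin> F \<longrightarrow> L $ i $ j = 0)"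

definition respects_coloring :: "('v \<times> 'v) set \<Rightarrow> ('v \<times> 'v \<Rightarrow> 'c) \<Rightarrow> real^'v^'v \<Rightarrow> bool" where
  "respects_coloring F c L \<longleftrightarrow>
     (\<forall>i j k l. (i, j) \<in> F \<longrightarrow> (k, l) \<in> F \<longrightarrow> c (i, j) = c (k, l) \<longrightarrow> L $ i $ j = L $ k $ l)"

lemma model_alt_def:
  "model E c = {transpose (matrix_inv (mat 1 - \<Lambda>)) ** diag_mat \<omega> ** matrix_inv (mat 1 - \<Lambda>) |
      \<Lambda> \<omega>. (\<forall>i. 0 < \<omega> i) \<and> supported_on E \<Lambda> \<and> respects_coloring E c \<Lambda>}"
  by (simp add: model_def diag_mat_def supported_on_def respects_coloring_def)

lemma matrix_inv_inverse:
  fixes A :: "'a::field^'n^'n"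
  assumes "invertible A"
  shows "A ** matrix_inv A = mat 1" and "matrix_inv A ** A = mat 1"
  using someI_ex[OF assms[unfolded invertible_def]] by (simp_all add: matrix_inv_def)

lemma matrix_inv_eqI:
  fixes A X :: "'a::field^'n^'n"
  assumes AX: "A ** X = mat 1"
  shows "matrix_inv A = X"
proof -
  have "invertible A" and XA: "X ** A = mat 1"
    using AX invertible_right_inverse matrix_left_right_inverse by blast+
  then have "matrix_inv A = X ** (A ** matrix_inv A)"
    by (simp add: matrix_mul_assoc)
  also have "\<dots> = X"
    by (simp add: matrix_inv_inverse \<open>invertible A\<close>)
  finally show ?thesis .
qed

lemma matrix_diff_rdistrib:
  fixes A B :: "'a::ring_1^'n::finite^'m" and C :: "'a^'p^'n"
  shows "(A - B) ** C = A ** C - B ** C"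
  by (vector matrix_matrix_mult_def sum_subtractf left_diff_distrib)

lemma diag_mat_one: "diag_mat (\<lambda>_. 1) = mat 1"
  by (simp add: diag_mat_def mat_def)

lemma diag_mat_mult: "diag_mat d ** diag_mat e = diag_mat (\<lambda>i. d i * e i)"
  by (simp add: diag_mat_def matrix_matrix_mult_def vec_eq_iff if_distrib if_distribR
      sum.If_cases)

lemma matrix_diag_transpose_entry:
  "(A ** diag_mat d ** transpose B) $ a $ b = (\<Sum>j\<in>UNIV. A $ a $ j * d j * B $ b $ j)"
  by (simp add: diag_mat_def matrix_matrix_mult_def transpose_def if_distrib if_distribR
      sum.If_cases mult.commute)

lemma invertible_id_minus_acyclic:
  fixes L :: "real^'v::finite^'v"
  assumes acyc: "acyclic F" and supp: "supported_on F L"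
  shows "invertible (mat 1 - L)"
proof -
  have "x = 0" if "(mat 1 - L) *v x = 0" for x :: "real^'v"
  proof -
    have fixpoint: "x = L *v x"
      using that by (simp add: matrix_vector_mult_diff_rdistrib)
    have "wf (F\<inverse>)"
      using acyc by (simp add: finite_acyclic_wf_converse)
    then have "x $ a = 0" for a
    proof (induction a)
      case (less a)
      have "x $ a = (\<Sum>b\<in>UNIV. L $ a $ b * x $ b)"
        by (subst fixpoint) (simp add: matrix_vector_mult_def)
      also have "\<dots> = 0"
        using less supp by (intro sum.neutral) (auto simp: supported_on_def)
      finally show ?case .
    qed
    then show ?thesis by (simp add: vec_eq_iff)
  qed
  then show ?thesis
    using matrix_left_invertible_ker invertible_left_inverse by blast
qed

lemma model_concentration:
  fixes F :: "('v::finite \<times> 'v) set"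
  assumes acyc: "acyclic F" and "\<Sigma> \<in> model F c"
  obtains L \<omega> where "supported_on F L" "respects_coloring F c L" "\<forall>i. 0 < \<omega> i"
    "(mat 1 - L) ** diag_mat (\<lambda>i. inverse (\<omega> i)) ** transpose (mat 1 - L) ** \<Sigma> = mat 1"
proof -
  obtain L \<omega> where \<Sigma>: "\<Sigma> = transpose (matrix_inv (mat 1 - L)) ** diag_mat \<omega> ** matrix_inv (mat 1 - L)"
    and pos: "\<forall>i. 0 < \<omega> i" and L: "supported_on F L" "respects_coloring F c L"
    using assms(2) unfolding model_alt_def by blast
  define B where "B = mat 1 - L"
  define M where "M = matrix_inv B"
  have BM: "B ** M = mat 1" and MB: "M ** B = mat 1"
    using matrix_inv_inverse invertible_id_minus_acyclic[OF acyc L(1)] unfolding B_def M_def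
    by blast+
  have MB': "transpose B ** transpose M = mat 1"
    using MB by (metis matrix_transpose_mul transpose_mat)
  have D\<omega>: "diag_mat (\<lambda>i. inverse (\<omega> i)) ** diag_mat \<omega> = mat 1"
    using pos by (simp add: diag_mat_mult less_imp_neq[symmetric] flip: diag_mat_one)
  have "B ** diag_mat (\<lambda>i. inverse (\<omega> i)) ** transpose B ** \<Sigma>
      = B ** (diag_mat (\<lambda>i. inverse (\<omega> i)) ** ((transpose B ** transpose M) ** diag_mat \<omega>)) ** M"
    unfolding \<Sigma> B_def[symmetric] M_def[symmetric] by (simp add: matrix_mul_assoc)
  also have "\<dots> = mat 1"
    by (simp add: MB' D\<omega> BM)
  finally show ?thesis
    using that L pos unfolding B_def by blast
qed

definition star_matrix :: "'v set \<Rightarrow> 'v \<Rightarrow> real^'v^'v" where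
  "star_matrix C k = (\<chi> a b. of_bool (a \<in> C \<and> b = k))"

lemma star_matrix_square:
  assumes "k \<notin> C"
  shows "star_matrix C k ** star_matrix C k = 0"
  using assms by (auto simp: star_matrix_def matrix_matrix_mult_def vec_eq_iff intro!: sum.neutral)

lemma star_concentration_entry:
  assumes "k \<notin> C"
  shows "((mat 1 - star_matrix C k) ** transpose (mat 1 - star_matrix C k)) $ a $ b =
    of_bool (a = b) + of_bool (a \<in> C \<and> b \<in> C) - of_bool (a = k \<and> b \<in> C) - of_bool (a \<in> C \<and> b = k)"
proof -
  let ?\<delta> = "\<lambda>x y. of_bool (x = y) :: real" and ?n = "\<lambda>x y. of_bool (x \<in> C \<and> y = k) :: real"
  have "((mat 1 - star_matrix C k) ** transpose (mat 1 - star_matrix C k)) $ a $ b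
      = (\<Sum>j\<in>UNIV. (?\<delta> a j - ?n a j) * (?\<delta> b j - ?n b j))"
    by (simp add: matrix_matrix_mult_def transpose_def mat_def star_matrix_def of_bool_def)
  also have "\<dots> = (\<Sum>j\<in>UNIV. ?\<delta> a j * ?\<delta> b j) - (\<Sum>j\<in>UNIV. ?\<delta> a j * ?n b j)
      - (\<Sum>j\<in>UNIV. ?n a j * ?\<delta> b j) + (\<Sum>j\<in>UNIV. ?n a j * ?n b j)"
    by (simp add: algebra_simps sum.distrib sum_subtractf)
  also have "\<dots> = ?\<delta> a b - of_bool (a = k \<and> b \<in> C) - of_bool (a \<in> C \<and> b = k) + of_bool (a \<in> C \<and> b \<in> C)"
    using assms by (simp add: of_bool_def if_distrib if_distribR sum.If_cases)
  finally show ?thesis by simp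
qed

lemma star_inverse:
  assumes "k \<notin> C"
  shows "(mat 1 - star_matrix C k) ** (mat 1 + star_matrix C k) = mat 1"
  using star_matrix_square[OF assms] by (simp add: matrix_diff_rdistrib matrix_add_ldistrib)

lemma star_covariance_concentration:
  assumes "k \<notin> C"
  shows "transpose (mat 1 + star_matrix C k) ** (mat 1 + star_matrix C k)
           ** ((mat 1 - star_matrix C k) ** transpose (mat 1 - star_matrix C k)) = mat 1"
proof -
  let ?N = "star_matrix C k"
  have "transpose (mat 1 + ?N) ** (mat 1 + ?N) ** ((mat 1 - ?N) ** transpose (mat 1 - ?N))
      = transpose (mat 1 + ?N) ** ((mat 1 + ?N) ** (mat 1 - ?N)) ** transpose (mat 1 - ?N)"
    by (simp add: matrix_mul_assoc)
  also have "\<dots> = transpose (mat 1 + ?N) ** transpose (mat 1 - ?N)"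
    using star_inverse[OF assms] matrix_left_right_inverse[of "mat 1 - ?N"] by simp
  also have "\<dots> = transpose ((mat 1 - ?N) ** (mat 1 + ?N))"
    by (simp add: matrix_transpose_mul)
  finally show ?thesis
    by (simp add: star_inverse[OF assms])
qed

lemma star_in_model:
  fixes c :: "'v::finite \<times> 'v \<Rightarrow> 'c" and \<gamma> :: 'c
  assumes "(k, k) \<notin> E" and blk: "blocked E c"
  defines "C \<equiv> {a. (a, k) \<in> E \<and> c (a, k) = \<gamma>}"
  shows "transpose (mat 1 + star_matrix C k) ** (mat 1 + star_matrix C k) \<in> model E c"
proof -
  have "k \<notin> C" using assms by (simp add: C_def)
  have "supported_on E (star_matrix C k)"
    by (auto simp: supported_on_def star_matrix_def C_def)
  moreover have "respects_coloring E c (star_matrix C k)"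
    using blk unfolding respects_coloring_def blocked_def star_matrix_def C_def by fastforce
  ultimately show ?thesis
    unfolding model_alt_def
    by (intro CollectI exI[of _ "star_matrix C k"] exI[of _ "\<lambda>_. 1"])
      (simp add: diag_mat_one matrix_inv_eqI[OF star_inverse[OF \<open>k \<notin> C\<close>]])
qed

lemma supported_on_acyclic_antisym:
  assumes "acyclic F" and "supported_on F L"
  shows "L $ a $ b = 0 \<or> L $ b $ a = 0"
proof -
  have "(a, b) \<notin> F \<or> (b, a) \<notin> F"
    using assms(1) unfolding acyclic_def by (meson trancl.r_into_trancl trancl_trans)
  then show ?thesis
    using assms(2) by (auto simp: supported_on_def)
qed

lemma concentration_entry_at_settled:
  fixes L :: "real^'v::finite^'v"
  assumes supp: "supported_on F L" and "(x, x) \<notin> F"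
    and settled: "\<forall>j. (x, j) \<in> F \<longrightarrow> (\<forall>a. L $ a $ j = 0) \<and> d j = 1"
  shows "((mat 1 - L) ** diag_mat d ** transpose (mat 1 - L)) $ a $ x
           = (of_bool (a = x) - L $ a $ x) * d x - L $ x $ a"
proof -
  have Lxx: "L $ x $ x = 0"
    using assms by (simp add: supported_on_def)
  have summand: "(of_bool (a = j) - L $ a $ j) * d j * (of_bool (x = j) - L $ x $ j)
      = (if j = x then (of_bool (a = x) - L $ a $ x) * d x else 0) - (if j = a then L $ x $ a else 0)"
    for j
  proof (cases "j = x")
    case True
    then show ?thesis using Lxx by auto
  next
    case jx: False
    show ?thesis
    proof (cases "(x, j) \<in> F")
      case True
      then show ?thesis using jx settled by auto
    next
      case False
      then show ?thesis using jx supp by (auto simp: supported_on_def)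
    qed
  qed
  have "((mat 1 - L) ** diag_mat d ** transpose (mat 1 - L)) $ a $ x
      = (\<Sum>j\<in>UNIV. (of_bool (a = j) - L $ a $ j) * d j * (of_bool (x = j) - L $ x $ j))"
    by (simp add: matrix_diag_transpose_entry mat_def of_bool_def)
  also have "\<dots> = (of_bool (a = x) - L $ a $ x) * d x - L $ x $ a"
    by (simp only: summand sum_subtractf) simp
  finally show ?thesis .
qed

lemma concentration_settled_columns:
  fixes L :: "real^'v::finite^'v"
  assumes acyc: "acyclic F" and supp: "supported_on F L"
    and unit_columns: "\<forall>x. x \<notin> S \<longrightarrow>
      (\<forall>a. ((mat 1 - L) ** diag_mat d ** transpose (mat 1 - L)) $ a $ x = of_bool (a = x))"
  shows "\<forall>y. (x, y) \<in> F\<^sup>* \<longrightarrow> y \<notin> S \<Longrightarrow> (\<forall>a. L $ a $ x = 0) \<and> d x = 1"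
  using finite_acyclic_wf_converse[OF finite acyc]
proof (induction x rule: wf_induct_rule)
  case (less x)
  have settled: "\<forall>j. (x, j) \<in> F \<longrightarrow> (\<forall>a. L $ a $ j = 0) \<and> d j = 1"
    using less by (meson converse_rtrancl_into_rtrancl converseI)
  have "(x, x) \<notin> F"
    using acyc by (auto simp: acyclic_def)
  note entry = concentration_entry_at_settled[OF supp this settled]
  have "x \<notin> S"
    using less.prems by blast
  then have entry_x: "of_bool (a = x) = (of_bool (a = x) - L $ a $ x) * d x - L $ x $ a" for a
    using entry unit_columns by simp
  have Lxx: "L $ x $ x = 0"
    using \<open>(x, x) \<notin> F\<close> supp by (simp add: supported_on_def)
  have dx: "d x = 1"
    using entry_x[of x] Lxx by simp
  have "L $ a $ x = 0" for a
  proof (cases "a = x")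
    case False
    then have "L $ a $ x + L $ x $ a = 0"
      using entry_x[of a] dx by simp
    then show ?thesis
      using supported_on_acyclic_antisym[OF acyc supp, of a x] by auto
  qed (simp add: Lxx)
  then show ?case using dx by blast
qed

lemma properly_edge_colored_partner:
  assumes "properly_edge_colored F c" and "blocked F c" and "(k, t) \<in> F"
  obtains k' where "(k', t) \<in> F" "k' \<noteq> k" "c (k', t) = c (k, t)"
proof -
  have "\<not> {f \<in> F. c f = c (k, t)} \<subseteq> {(k, t)}"
  proof
    assume "{f \<in> F. c f = c (k, t)} \<subseteq> {(k, t)}"
    then have "card {f \<in> F. c f = c (k, t)} \<le> 1"
      using card_mono[of "{(k, t)}"] by fastforce
    then show False
      using assms(1,3) unfolding properly_edge_colored_def by fastforce
  qed
  then obtain k' t' where "(k', t') \<in> F" "c (k', t') = c (k, t)" "(k', t') \<noteq> (k, t)"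
    by auto
  moreover have "t' = t"
    using assms(2,3) calculation unfolding blocked_def by blast
  ultimately show ?thesis
    using that by blast
qed

lemma settled_vertex_notin_star_tails:
  fixes L :: "real^'v::finite^'v" and c :: "'v \<times> 'v \<Rightarrow> 'c"
  assumes acyc: "acyclic F" and blk: "blocked F c" and prp: "properly_edge_colored F c"
    and supp: "supported_on F L" and resp: "respects_coloring F c L" and "k \<notin> C"
    and conc_eq: "(mat 1 - L) ** diag_mat d ** transpose (mat 1 - L)
                 = (mat 1 - star_matrix C k) ** transpose (mat 1 - star_matrix C k)"
    and top: "\<And>a. ((mat 1 - L) ** diag_mat d ** transpose (mat 1 - L)) $ a $ t
      = (of_bool (a = t) - L $ a $ t) * d t - L $ t $ a"
    and "L $ t $ k = 0"
  shows "t \<notin> C"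
proof
  note conc = star_concentration_entry[OF \<open>k \<notin> C\<close>, folded conc_eq]
  assume "t \<in> C"
  then have "k \<noteq> t" using \<open>k \<notin> C\<close> by blast
  then have "L $ k $ t * d t = 1"
    using conc[of k t] top[of k] \<open>t \<in> C\<close> \<open>k \<notin> C\<close> \<open>L $ t $ k = 0\<close> by simp
  then have "(k, t) \<in> F"
    using supp unfolding supported_on_def by (cases "(k, t) \<in> F") auto
  then obtain k' where k't: "(k', t) \<in> F" and "k' \<noteq> k" and "c (k', t) = c (k, t)"
    using properly_edge_colored_partner[OF prp blk] by blast
  then have "L $ k' $ t = L $ k $ t"
    using resp \<open>(k, t) \<in> F\<close> unfolding respects_coloring_def by blast
  have "k' \<noteq> t"
    using k't acyc by (auto simp: acyclic_def)
  have "L $ t $ k' = 0"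
    using supported_on_acyclic_antisym[OF acyc supp, of k' t] \<open>L $ k' $ t = L $ k $ t\<close>
      \<open>L $ k $ t * d t = 1\<close> by auto
  \<comment> \<open>The entry (k', t) is -1 by the factorisation through L, but of_bool (k' \<in> C) by conc.\<close>
  then show False
    using conc[of k' t] top[of k'] \<open>k' \<noteq> t\<close> \<open>k' \<noteq> k\<close> \<open>t \<in> C\<close> \<open>L $ k' $ t = L $ k $ t\<close>
      \<open>L $ k $ t * d t = 1\<close> \<open>k \<noteq> t\<close> by (cases "k' \<in> C") (auto simp: algebra_simps)
qed

lemma acyclic_maximal_element:
  fixes F :: "('v::finite \<times> 'v) set"
  assumes "acyclic F" and "x \<in> S"
  obtains t where "t \<in> S" and "\<And>y. (t, y) \<in> F\<^sup>+ \<Longrightarrow> y \<notin> S"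
proof -
  have "wf ((F\<^sup>+)\<inverse>)"
    using wf_trancl[OF finite_acyclic_wf_converse[OF finite assms(1)]] by (simp add: trancl_converse)
  then show ?thesis
    using that assms(2) by (metis converseI wfE_min)
qed

lemma settled_head_star_column:
  fixes L :: "real^'v::finite^'v"
  assumes acyc: "acyclic F" and supp: "supported_on F L" and kC: "k \<notin> C"
    and conc_eq: "(mat 1 - L) ** diag_mat d ** transpose (mat 1 - L)
                 = (mat 1 - star_matrix C k) ** transpose (mat 1 - star_matrix C k)"
    and top: "\<And>a. ((mat 1 - L) ** diag_mat d ** transpose (mat 1 - L)) $ a $ k
      = (of_bool (a = k) - L $ a $ k) * d k - L $ k $ a"
    and row: "\<And>y. y \<in> C \<Longrightarrow> L $ k $ y = 0"
  shows "L $ a $ k = of_bool (a \<in> C)"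
proof -
  note conc = star_concentration_entry[OF kC, folded conc_eq]
  have Lkk: "L $ k $ k = 0"
    using supported_on_acyclic_antisym[OF acyc supp, of k k] by simp
  have dk: "d k = 1"
    using top[of k] conc[of k k] kC Lkk by simp
  show ?thesis
  proof (cases "a \<in> C")
    case True
    then show ?thesis
      using top[of a] conc[of a k] row[of a] kC dk by auto
  next
    case False
    then have "a = k \<or> L $ a $ k + L $ k $ a = 0"
      using top[of a] conc[of a k] dk kC by auto
    then show ?thesis
      using False Lkk supported_on_acyclic_antisym[OF acyc supp, of a k] by auto
  qed
qed

lemma star_concentration_column:
  fixes L :: "real^'v::finite^'v" and c :: "'v \<times> 'v \<Rightarrow> 'c"
  assumes acyc: "acyclic F" and blk: "blocked F c" and prp: "properly_edge_colored F c"
    and supp: "supported_on F L" and resp: "respects_coloring F c L" and kC: "k \<notin> C"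
    and conc_eq: "(mat 1 - L) ** diag_mat d ** transpose (mat 1 - L)
                 = (mat 1 - star_matrix C k) ** transpose (mat 1 - star_matrix C k)"
  shows "L $ a $ k = of_bool (a \<in> C)"
proof -
  define S where "S = insert k C"
  obtain t where "t \<in> S" and top: "\<And>y. (t, y) \<in> F\<^sup>+ \<Longrightarrow> y \<notin> S"
    using acyclic_maximal_element[OF acyc, of k S] by (auto simp: S_def)
  have unit_columns: "\<forall>x. x \<notin> S \<longrightarrow>
      (\<forall>a. ((mat 1 - L) ** diag_mat d ** transpose (mat 1 - L)) $ a $ x = of_bool (a = x))"
    using star_concentration_entry[OF kC, folded conc_eq] by (simp add: S_def)
  have settled: "\<forall>j. (t, j) \<in> F \<longrightarrow> (\<forall>a. L $ a $ j = 0) \<and> d j = 1"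
  proof (intro allI impI)
    fix j
    assume "(t, j) \<in> F"
    then have "\<forall>y. (j, y) \<in> F\<^sup>* \<longrightarrow> y \<notin> S"
      using top by (meson rtrancl_into_trancl2)
    then show "(\<forall>a. L $ a $ j = 0) \<and> d j = 1"
      by (rule concentration_settled_columns[OF acyc supp unit_columns])
  qed
  have row: "L $ t $ y = 0" if "y \<in> S" for y
    using top[of y] that supp by (auto simp: supported_on_def)
  have "(t, t) \<notin> F"
    using acyc by (auto simp: acyclic_def)
  note top_entry = concentration_entry_at_settled[OF supp this settled]
  have "L $ t $ k = 0"
    using row by (simp add: S_def)
  then have "t \<notin> C"
    by (rule settled_vertex_notin_star_tails[OF acyc blk prp supp resp kC conc_eq top_entry])
  then have "t = k"
    using \<open>t \<in> S\<close> by (simp add: S_def)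
  have row_k: "\<And>y. y \<in> C \<Longrightarrow> L $ k $ y = 0"
    using row \<open>t = k\<close> by (simp add: S_def)
  show ?thesis
    by (rule settled_head_star_column[OF acyc supp kC conc_eq top_entry[unfolded \<open>t = k\<close>] row_k])
qed

lemma model_subset_star_column:
  fixes E F :: "('v::finite \<times> 'v) set" and c :: "'v \<times> 'v \<Rightarrow> 'c" and c' :: "'v \<times> 'v \<Rightarrow> 'd"
    and k :: 'v and \<gamma> :: 'c
  assumes acycE: "acyclic E" and blkE: "blocked E c" and F: "BPEC_DAG F c'"
    and sub: "model E c \<subseteq> model F c'"
  obtains L where "supported_on F L" and "respects_coloring F c' L"
    and "\<And>a. L $ a $ k = of_bool ((a, k) \<in> E \<and> c (a, k) = \<gamma>)"
proof -
  define C where "C = {a. (a, k) \<in> E \<and> c (a, k) = \<gamma>}"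
  have acyc: "acyclic F" and blk: "blocked F c'" and prp: "properly_edge_colored F c'"
    using F by (simp_all add: BPEC_DAG_def is_DAG_def)
  define \<Sigma> where "\<Sigma> = transpose (mat 1 + star_matrix C k) ** (mat 1 + star_matrix C k)"
  have "(k, k) \<notin> E"
    using acycE by (auto simp: acyclic_def)
  then have kC: "k \<notin> C"
    by (simp add: C_def)
  have "\<Sigma> \<in> model F c'"
    using star_in_model[OF \<open>(k, k) \<notin> E\<close> blkE] sub unfolding \<Sigma>_def C_def by blast
  then obtain L \<omega> where supp: "supported_on F L" and resp: "respects_coloring F c' L"
    and left_inv: "(mat 1 - L) ** diag_mat (\<lambda>i. inverse (\<omega> i)) ** transpose (mat 1 - L) ** \<Sigma> = mat 1"
    using model_concentration[OF acyc] by metis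
  let ?K = "(mat 1 - L) ** diag_mat (\<lambda>i. inverse (\<omega> i)) ** transpose (mat 1 - L)"
  have "?K = ?K ** (\<Sigma> ** ((mat 1 - star_matrix C k) ** transpose (mat 1 - star_matrix C k)))"
    using star_covariance_concentration[OF kC] by (simp add: \<Sigma>_def)
  also have "\<dots> = (mat 1 - star_matrix C k) ** transpose (mat 1 - star_matrix C k)"
    by (simp add: matrix_mul_assoc left_inv)
  finally have "L $ a $ k = of_bool (a \<in> C)" for a
    by (rule star_concentration_column[OF acyc blk prp supp resp kC])
  then show ?thesis
    using that supp resp by (simp add: C_def)
qed

lemma model_subset_reflects_color_classes:
  fixes E F :: "('v::finite \<times> 'v) set" and c :: "'v \<times> 'v \<Rightarrow> 'c" and c' :: "'v \<times> 'v \<Rightarrow> 'd"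
  assumes acycE: "acyclic E" and blkE: "blocked E c" and F: "BPEC_DAG F c'"
    and sub: "model E c \<subseteq> model F c'" and "e \<in> E"
  shows "e \<in> F" and "\<forall>f\<in>F. c' f = c' e \<longrightarrow> f \<in> E \<and> c f = c e"
proof -
  obtain i k where e: "e = (i, k)"
    by fastforce
  obtain L where supp: "supported_on F L" and resp: "respects_coloring F c' L"
    and column: "\<And>a. L $ a $ k = of_bool ((a, k) \<in> E \<and> c (a, k) = c e)"
    using model_subset_star_column[where k = k and \<gamma> = "c e", OF acycE blkE F sub] by blast
  have Lik: "L $ i $ k = 1"
    using \<open>e \<in> E\<close> by (simp add: column e)
  then show "e \<in> F"
    using supp unfolding e supported_on_def by (cases "(i, k) \<in> F") auto
  show "\<forall>f\<in>F. c' f = c' e \<longrightarrow> f \<in> E \<and> c f = c e"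
  proof (intro ballI impI)
    fix f
    assume "f \<in> F" and "c' f = c' e"
    obtain a l where f: "f = (a, l)"
      by fastforce
    have "l = k"
      using F \<open>f \<in> F\<close> \<open>e \<in> F\<close> \<open>c' f = c' e\<close> unfolding BPEC_DAG_def blocked_def e f by blast
    moreover have "L $ a $ l = L $ i $ k"
      using resp \<open>f \<in> F\<close> \<open>e \<in> F\<close> \<open>c' f = c' e\<close> unfolding respects_coloring_def e f by blast
    ultimately have "L $ a $ k = 1"
      using Lik by simp
    then show "f \<in> E \<and> c f = c e"
      using column[of a] \<open>l = k\<close> f by (simp split: if_splits)
  qed
qed

theorem theorem5p13:
  fixes E :: "('v::finite \<times> 'v) set" and c :: "'v \<times> 'v \<Rightarrow> 'c"
    and F :: "('v \<times> 'v) set" and c' :: "'v \<times> 'v \<Rightarrow> 'd"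
  assumes "BPEC_DAG E c" and "BPEC_DAG F c'"
    and "model E c = model F c'"
  shows "E = F \<and> (\<forall>e \<in> E. \<forall>f \<in> E. c e = c f \<longleftrightarrow> c' e = c' f)"
proof -
  have acyc: "acyclic E" "acyclic F" and blk: "blocked E c" "blocked F c'"
    using assms(1,2) by (simp_all add: BPEC_DAG_def is_DAG_def)
  note EF = model_subset_reflects_color_classes[OF acyc(1) blk(1) assms(2) equalityD1[OF assms(3)]]
  note FE = model_subset_reflects_color_classes[OF acyc(2) blk(2) assms(1) equalityD2[OF assms(3)]]
  have "E = F"
    using EF(1) FE(1) by blast
  moreover have "c e = c f \<longleftrightarrow> c' e = c' f" if "e \<in> E" and "f \<in> E" for e f
    using EF(2)[OF \<open>e \<in> E\<close>] FE(2)[of e] that \<open>E = F\<close> by metis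
  ultimately show ?thesis
    by blast
qed

end
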